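(* Let $(T,\to)$ be a countable tournament such that $\mathrm{Aut}(T,\to)$ is transitive on $T$ and transitive on the set of arcs $\{(x,y): x\to y\}$. Suppose that for each vertex $x$, the 3-cycle $C_3$ embeds in the subtournament induced on $x^+=\{y: x\to y\}$. Then $C_3$ embeds in the subtournament induced on $x^-=\{y:y\to x\}$ for each vertex $x$.
   Context: A tournament is a digraph in which for any distinct $x,y$ exactly one of $x\to y$, $y\to x$ holds. $C_3$ denotes the tournament on $\{a,b,c\}$ with $a\to b\to c\to a$. *)

theory Defs
  imports Main "HOL-Library.Countable_Set"
begin

definition tournament :: "'a set \<Rightarrow> ('a \<Rightarrow> 'a \<Rightarrow> bool) \<Rightarrow> bool" where
  "tournament V E \<longleftrightarrow>
     (\<forall>x\<in>V. \<not> E x x) \<and>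
     (\<forall>x\<in>V. \<forall>y\<in>V. x \<noteq> y \<longrightarrow> (E x y \<longleftrightarrow> \<not> E y x))"

definition automorphism :: "'a set \<Rightarrow> ('a \<Rightarrow> 'a \<Rightarrow> bool) \<Rightarrow> ('a \<Rightarrow> 'a) \<Rightarrow> bool" where
  "automorphism V E f \<longleftrightarrow> bij_betw f V V \<and> (\<forall>x\<in>V. \<forall>y\<in>V. E x y \<longleftrightarrow> E (f x) (f y))"

definition vertex_transitive :: "'a set \<Rightarrow> ('a \<Rightarrow> 'a \<Rightarrow> bool) \<Rightarrow> bool" where
  "vertex_transitive V E \<longleftrightarrow>
     (\<forall>x\<in>V. \<forall>y\<in>V. \<exists>f. automorphism V E f \<and> f x = y)"

definition arc_transitive :: "'a set \<Rightarrow> ('a \<Rightarrow> 'a \<Rightarrow> bool) \<Rightarrow> bool" where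
  "arc_transitive V E \<longleftrightarrow>
     (\<forall>x\<in>V. \<forall>y\<in>V. \<forall>u\<in>V. \<forall>v\<in>V. E x y \<longrightarrow> E u v \<longrightarrow>
        (\<exists>f. automorphism V E f \<and> f x = u \<and> f y = v))"

definition out_nbhd :: "'a set \<Rightarrow> ('a \<Rightarrow> 'a \<Rightarrow> bool) \<Rightarrow> 'a \<Rightarrow> 'a set" where
  "out_nbhd V E x = {y\<in>V. E x y}"

definition in_nbhd :: "'a set \<Rightarrow> ('a \<Rightarrow> 'a \<Rightarrow> bool) \<Rightarrow> 'a \<Rightarrow> 'a set" where
  "in_nbhd V E x = {y\<in>V. E y x}"

definition C3_arc :: "nat \<Rightarrow> nat \<Rightarrow> bool" where
  "C3_arc i j \<longleftrightarrow> (i = 0 \<and> j = 1) \<or> (i = 1 \<and> j = 2) \<or> (i = 2 \<and> j = 0)"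

definition embeds_C3 :: "('a \<Rightarrow> 'a \<Rightarrow> bool) \<Rightarrow> 'a set \<Rightarrow> bool" where
  "embeds_C3 E S \<longleftrightarrow> (\<exists>g. inj_on g {0::nat,1,2} \<and> g ` {0,1,2} \<subseteq> S \<and>
     (\<forall>i\<in>{0,1,2}. \<forall>j\<in>{0,1,2}. C3_arc i j \<longleftrightarrow> E (g i) (g j)))"

end

theory Submission
  imports Defs
begin

text \<open>Take a 3-cycle a -> b -> c -> a in the out-neighbourhood of z and, by arc transitivity,
  an automorphism f mapping the arc z -> a onto b -> c. With p = f b and q = f c the images of the
  arcs at z give b -> p, b -> q, c -> p, q -> c and p -> q. Splitting on the arcs between a and
  p, q yields a 3-cycle inside some in-neighbourhood: a b c into p if a -> p; q c p into a if
  p -> a and q -> a; a b p into q otherwise. Vertex transitivity carries it to every vertex.\<close>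

definition cyclic_triple :: "('a \<Rightarrow> 'a \<Rightarrow> bool) \<Rightarrow> 'a set \<Rightarrow> bool" where
  "cyclic_triple E S \<longleftrightarrow> (\<exists>a\<in>S. \<exists>b\<in>S. \<exists>c\<in>S. E a b \<and> E b c \<and> E c a)"

lemma tournament_irrefl: "tournament V E \<Longrightarrow> x \<in> V \<Longrightarrow> \<not> E x x"
  unfolding tournament_def by blast

lemma tournament_asym: "tournament V E \<Longrightarrow> x \<in> V \<Longrightarrow> y \<in> V \<Longrightarrow> E x y \<Longrightarrow> \<not> E y x"
  unfolding tournament_def by metis

lemma tournament_total:
  "tournament V E \<Longrightarrow> x \<in> V \<Longrightarrow> y \<in> V \<Longrightarrow> x \<noteq> y \<Longrightarrow> \<not> E x y \<Longrightarrow> E y x"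
  unfolding tournament_def by blast

lemma embeds_C3_iff_cyclic_triple:
  assumes T: "tournament V E" and S: "S \<subseteq> V"
  shows "embeds_C3 E S \<longleftrightarrow> cyclic_triple E S"
proof
  assume "embeds_C3 E S"
  then obtain g where g: "g ` {0::nat,1,2} \<subseteq> S"
    "\<forall>i\<in>{0,1,2}. \<forall>j\<in>{0,1,2}. C3_arc i j \<longleftrightarrow> E (g i) (g j)"
    unfolding embeds_C3_def by blast
  then have "E (g 0) (g 1)" "E (g 1) (g 2)" "E (g 2) (g 0)"
    unfolding C3_arc_def by auto
  with g(1) show "cyclic_triple E S"
    unfolding cyclic_triple_def by blast
next
  assume "cyclic_triple E S"
  then obtain a b c where abc: "a \<in> S" "b \<in> S" "c \<in> S" "E a b" "E b c" "E c a"
    unfolding cyclic_triple_def by blast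
  with S have V: "a \<in> V" "b \<in> V" "c \<in> V" by auto
  have non_arcs: "\<not> E b a" "\<not> E c b" "\<not> E a c" "\<not> E a a" "\<not> E b b" "\<not> E c c"
    using tournament_asym[OF T] tournament_irrefl[OF T] V abc(4-6) by blast+
  then have distinct: "a \<noteq> b" "b \<noteq> c" "c \<noteq> a"
    using abc(4-6) by auto
  define g where "g = (\<lambda>i::nat. if i = 0 then a else if i = 1 then b else c)"
  have "inj_on g {0,1,2}" "g ` {0,1,2} \<subseteq> S"
    using distinct abc(1-3) unfolding g_def inj_on_def by auto
  moreover have "\<forall>i\<in>{0,1,2}. \<forall>j\<in>{0,1,2}. C3_arc i j \<longleftrightarrow> E (g i) (g j)"
    using abc(4-6) non_arcs unfolding g_def C3_arc_def by auto
  ultimately show "embeds_C3 E S"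
    unfolding embeds_C3_def by blast
qed

lemma automorphism_cyclic_triple_in_nbhd:
  assumes f: "automorphism V E f" and y: "y \<in> V"
    and "cyclic_triple E (in_nbhd V E y)"
  shows "cyclic_triple E (in_nbhd V E (f y))"
proof -
  have fV: "\<And>u. u \<in> V \<Longrightarrow> f u \<in> V"
    and fE: "\<And>u w. u \<in> V \<Longrightarrow> w \<in> V \<Longrightarrow> E u w \<longleftrightarrow> E (f u) (f w)"
    using f unfolding automorphism_def bij_betw_def by auto
  obtain r s t where rst: "r \<in> V" "s \<in> V" "t \<in> V"
    and into_y: "E r y" "E s y" "E t y" and cycle: "E r s" "E s t" "E t r"
    using assms(3) unfolding cyclic_triple_def in_nbhd_def by blast
  have "f r \<in> in_nbhd V E (f y)" "f s \<in> in_nbhd V E (f y)" "f t \<in> in_nbhd V E (f y)"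
    using rst into_y fV fE y unfolding in_nbhd_def by auto
  moreover have "E (f r) (f s)" "E (f s) (f t)" "E (f t) (f r)"
    using rst cycle fE by auto
  ultimately show ?thesis
    unfolding cyclic_triple_def by blast
qed

lemma vertex_transitive_cyclic_triple_in_nbhd:
  assumes "vertex_transitive V E" and "y \<in> V" "cyclic_triple E (in_nbhd V E y)"
    and "x \<in> V"
  shows "cyclic_triple E (in_nbhd V E x)"
proof -
  obtain f where "automorphism V E f" "f y = x"
    using assms(1,2,4) unfolding vertex_transitive_def by blast
  then show ?thesis
    using automorphism_cyclic_triple_in_nbhd assms(2,3) by metis
qed

lemma arc_transitive_cyclic_triple_in_some_in_nbhd:
  assumes T: "tournament V E" and "arc_transitive V E" and z: "z \<in> V"
    and "cyclic_triple E (out_nbhd V E z)"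
  shows "\<exists>y\<in>V. cyclic_triple E (in_nbhd V E y)"
proof -
  obtain a b c where V: "a \<in> V" "b \<in> V" "c \<in> V"
    and out_z: "E z a" "E z b" "E z c" and abc: "E a b" "E b c" "E c a"
    using assms(4) unfolding cyclic_triple_def out_nbhd_def by blast
  obtain f where f: "automorphism V E f" "f z = b" "f a = c"
    using assms(2) z V out_z abc unfolding arc_transitive_def by blast
  have fV: "\<And>u. u \<in> V \<Longrightarrow> f u \<in> V"
    and fE: "\<And>u w. u \<in> V \<Longrightarrow> w \<in> V \<Longrightarrow> E u w \<longleftrightarrow> E (f u) (f w)"
    using f(1) unfolding automorphism_def bij_betw_def by auto
  define p where "p = f b"
  define q where "q = f c"
  have pq: "p \<in> V" "q \<in> V"
    unfolding p_def q_def using fV V by auto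
  have arcs: "E b p" "E b q" "E c p" "E q c" "E p q"
    using fE[of z b] fE[of z c] fE[of a b] fE[of c a] fE[of b c] V z out_z abc f(2,3)
    unfolding p_def q_def by simp_all
  have cyclic_in: "\<exists>y\<in>V. cyclic_triple E (in_nbhd V E y)"
    if "r \<in> V" "s \<in> V" "t \<in> V" "y \<in> V" "E r y" "E s y" "E t y" "E r s" "E s t" "E t r"
    for r s t y
    using that unfolding cyclic_triple_def in_nbhd_def by blast
  have a_ne: "a \<noteq> p" "a \<noteq> q"
    using tournament_asym[OF T] V pq abc(1) arcs(1,2) by blast+
  show ?thesis
  proof (cases "E a p")
    case True
    then show ?thesis using cyclic_in[of a b c p] V pq arcs abc by blast
  next
    case False
    then have pa: "E p a"
      using tournament_total[OF T] V(1) pq(1) a_ne(1) by blast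
    show ?thesis
    proof (cases "E q a")
      case True
      then show ?thesis using cyclic_in[of q c p a] V pq arcs pa abc by blast
    next
      case False
      then have "E a q"
        using tournament_total[OF T] V(1) pq(2) a_ne(2) by blast
      then show ?thesis using cyclic_in[of a b p q] V pq arcs pa abc by blast
    qed
  qed
qed

theorem lemma3p4:
  fixes V :: "'a set" and E :: "'a \<Rightarrow> 'a \<Rightarrow> bool"
  assumes "countable V"
    and "tournament V E"
    and "vertex_transitive V E"
    and "arc_transitive V E"
    and "\<forall>x\<in>V. embeds_C3 E (out_nbhd V E x)"
  shows "\<forall>x\<in>V. embeds_C3 E (in_nbhd V E x)"
proof
  fix x assume x: "x \<in> V"
  have "out_nbhd V E x \<subseteq> V" "in_nbhd V E x \<subseteq> V"
    unfolding out_nbhd_def in_nbhd_def by auto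
  note embeds_iff = this[THEN embeds_C3_iff_cyclic_triple[OF assms(2)]]
  have "cyclic_triple E (out_nbhd V E x)"
    using assms(5) x embeds_iff(1) by simp
  then obtain y where "y \<in> V" "cyclic_triple E (in_nbhd V E y)"
    using arc_transitive_cyclic_triple_in_some_in_nbhd[OF assms(2,4) x] by blast
  then have "cyclic_triple E (in_nbhd V E x)"
    by (rule vertex_transitive_cyclic_triple_in_nbhd[OF assms(3) _ _ x])
  then show "embeds_C3 E (in_nbhd V E x)"
    using embeds_iff(2) by simp
qed

end
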